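(* Let $m\geq 0$ and $n>1$. There is an injection from $P_3(-m+1,n)$ to $Q_3(m,n)$.
   Context: Partitions are identified with their $m$-Durfee rectangle symbols, defined as follows. - For a partition $\lambda$ of $n$ with $\ell(\lambda)>m$ parts, let $j\geq1$ be the largest integer with $\lambda_{m+j}\geq j$. Let $\alpha$ be the partition whose $i$-th part is the number of $k\leq m+j$ with $\lambda_k\geq j+i$ (the columns right of the $(m+j)\times j$ rectangle). Let $\beta=(\lambda_{m+j+1},\lambda_{m+j+2},\ldots)$ (the rows below the rectangle). - If $\ell(\lambda)\leq m$, set $j=0$, $\alpha=\lambda'$ (the conjugate) and $\beta=\emptyset$. The symbol is written $(\alpha,\beta)_{(m+j)\times j}$, with $\ell(\cdot)$ denoting number of parts. The first part of an empty sequence is taken to be $0$. $P(-m+1,n)$ is the set of partitions of $n$ with rank (largest part minus number of parts) at least $-m+1$. $P_3(-m+1,n)$ is the set of those $(\alpha,\beta)_{(m+j)\times j}\in P(-m+1,n)$ with $j\geq2$ and $\beta_1\leq j-2$. The rank-set of $\lambda=(\lambda_1,\ldots,\lambda_\ell)$ is $[-\lambda_1,1-\lambda_2,\ldots,\ell-1-\lambda_\ell,\ell,\ell+1,\ldots]$. $Q(m,n)$ is the set of partitions of $n$ whose rank-set contains $m$. $Q_3(m,n)$ is the set of $(\gamma,\delta)_{(m+j')\times j'}\in Q(m,n)$ with $j'\geq1$, $\ell(\delta)-\ell(\gamma)\geq 0$ and $\gamma_1=m+j'$. *)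

theory Defs
  imports Main
begin

definition is_partition :: "nat list \<Rightarrow> bool" where
  "is_partition xs \<longleftrightarrow> sorted_wrt (\<ge>) xs \<and> (\<forall>x\<in>set xs. 0 < x)"

definition partitions :: "nat \<Rightarrow> nat list set" where
  "partitions n = {xs. is_partition xs \<and> sum_list xs = n}"

text \<open>1-based part lambda_i, with lambda_i = 0 beyond the length
 (in particular, the first part of an empty sequence is 0).\<close>
definition part :: "nat list \<Rightarrow> nat \<Rightarrow> nat" where
  "part xs i = (if 1 \<le> i \<and> i \<le> length xs then xs ! (i - 1) else 0)"

definition conj_part :: "nat list \<Rightarrow> nat list" where
  "conj_part xs = [length (filter (\<lambda>x. i \<le> x) xs). i \<leftarrow> [1..<part xs 1 + 1]]"

text \<open>The m-Durfee rectangle symbol (alpha, beta)_{(m+j) x j}.\<close>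

definition durfee_j :: "nat \<Rightarrow> nat list \<Rightarrow> nat" where
  "durfee_j m xs = (if length xs \<le> m then 0
      else (GREATEST j. 1 \<le> j \<and> j \<le> length xs \<and> j \<le> part xs (m + j)))"

definition durfee_alpha :: "nat \<Rightarrow> nat list \<Rightarrow> nat list" where
  "durfee_alpha m xs = (if length xs \<le> m then conj_part xs
      else (let j = durfee_j m xs in
        filter (\<lambda>c. 0 < c)
          [card {k. 1 \<le> k \<and> k \<le> m + j \<and> j + i \<le> part xs k}. i \<leftarrow> [1..<part xs 1 + 1]]))"

definition durfee_beta :: "nat \<Rightarrow> nat list \<Rightarrow> nat list" where
  "durfee_beta m xs = (if length xs \<le> m then [] else drop (m + durfee_j m xs) xs)"

definition rank :: "nat list \<Rightarrow> int" where
  "rank xs = int (part xs 1) - int (length xs)"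

definition P_set :: "int \<Rightarrow> nat \<Rightarrow> nat list set" where
  "P_set r n = {xs \<in> partitions n. r \<le> rank xs}"

definition P3 :: "nat \<Rightarrow> nat \<Rightarrow> nat list set" where
  "P3 m n = {xs \<in> P_set (- int m + 1) n.
      2 \<le> durfee_j m xs \<and> int (part (durfee_beta m xs) 1) \<le> int (durfee_j m xs) - 2}"

definition rank_set :: "nat list \<Rightarrow> int set" where
  "rank_set xs = {int i - 1 - int (part xs i) | i. 1 \<le> i \<and> i \<le> length xs}
                 \<union> {k. int (length xs) \<le> k}"

definition Q_set :: "nat \<Rightarrow> nat \<Rightarrow> nat list set" where
  "Q_set m n = {xs \<in> partitions n. int m \<in> rank_set xs}"

definition Q3 :: "nat \<Rightarrow> nat \<Rightarrow> nat list set" where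
  "Q3 m n = {xs \<in> Q_set m n.
      1 \<le> durfee_j m xs \<and>
      int (length (durfee_beta m xs)) - int (length (durfee_alpha m xs)) \<ge> 0 \<and>
      part (durfee_alpha m xs) 1 = m + durfee_j m xs}"

end

theory Submission
  imports Defs
begin

text \<open>
  Let \<open>\<lambda> \<in> P\<^sub>3\<close> have Durfee rectangle \<open>(m + j) \<times> j\<close>, so \<open>j \<ge> 2\<close> and every part of \<open>\<beta>\<close> is
  at most \<open>j - 2\<close>. Delete the first row \<open>\<lambda>\<^sub>1\<close>, keep \<open>\<lambda>\<^sub>2, \<dots>, \<lambda>\<^sub>m\<^sub>+\<^sub>j\<close>, insert a part
  \<open>j - 1\<close>, add one to every part of \<open>\<beta>\<close> and pad with \<open>\<lambda>\<^sub>1 - (j - 1) - \<ell>(\<beta>)\<close> parts equal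
  to 1 (nonnegative by the rank condition), so that the size is unchanged. The result \<open>\<mu>\<close>
  has Durfee rectangle \<open>(m + j - 1) \<times> (j - 1)\<close>; its parts \<open>\<lambda>\<^sub>2, \<dots>, \<lambda>\<^sub>m\<^sub>+\<^sub>j \<ge> j\<close> make the
  first column of \<open>\<alpha>\<close> full, the inserted part at position \<open>m + j\<close> puts \<open>m\<close> into the
  rank-set, and the new \<open>\<beta>\<close> has \<open>\<lambda>\<^sub>1 - j + 2\<close> parts, more than \<open>\<alpha>\<close> can have columns.
  The map is injective because \<open>\<lambda>\<^sub>1\<close> is read off as \<open>\<ell>(\<mu>) - m - 1\<close> and \<open>\<beta>\<close> as the
  parts \<open>\<ge> 2\<close> following the inserted part, lowered by one.
\<close>

lemma part_append:
  "part (xs @ ys) i = (if i \<le> length xs then part xs i else part ys (i - length xs))"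
  by (auto simp: part_def nth_append)

lemma is_partition_append:
  "is_partition (xs @ ys) \<longleftrightarrow>
     is_partition xs \<and> is_partition ys \<and> (\<forall>x\<in>set xs. \<forall>y\<in>set ys. y \<le> x)"
  by (auto simp: is_partition_def sorted_wrt_append)

lemma is_partition_Cons:
  "is_partition (x # xs) \<longleftrightarrow> 0 < x \<and> (\<forall>y\<in>set xs. y \<le> x) \<and> is_partition xs"
  by (auto simp: is_partition_def)

lemma is_partition_map_Suc: "sorted_wrt (\<ge>) xs \<Longrightarrow> is_partition (map Suc xs)"
  by (simp add: is_partition_def sorted_wrt_map)

lemma is_partition_replicate: "0 < c \<Longrightarrow> is_partition (replicate k c)"
  by (induction k) (auto simp: is_partition_def)

lemma is_partition_take: "is_partition xs \<Longrightarrow> is_partition (take k xs)"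
  by (auto simp: is_partition_def sorted_wrt_take dest: in_set_takeD)

lemma is_partition_drop: "is_partition xs \<Longrightarrow> is_partition (drop k xs)"
  by (auto simp: is_partition_def sorted_wrt_drop dest: in_set_dropD)

lemma part_pos_iff:
  "is_partition xs \<Longrightarrow> 0 < part xs i \<longleftrightarrow> 1 \<le> i \<and> i \<le> length xs"
  by (auto simp: part_def is_partition_def)

lemma part_antimono:
  assumes "is_partition xs" "1 \<le> a" "a \<le> b"
  shows "part xs b \<le> part xs a"
proof (cases "b \<le> length xs \<and> a < b")
  case True
  then have "xs ! (b - 1) \<le> xs ! (a - 1)"
    using assms by (auto simp: is_partition_def sorted_wrt_iff_nth_less)
  then show ?thesis
    using True assms by (simp add: part_def)
qed (use assms in \<open>auto simp: part_def\<close>)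

lemma part_le_set_take:
  assumes "is_partition xs" "a \<in> set (take k xs)"
  shows "part xs k \<le> a"
proof -
  obtain t where t: "t < k" "t < length xs" "a = xs ! t"
    using assms(2) by (auto simp: in_set_conv_nth)
  then have "a = part xs (Suc t)"
    by (simp add: part_def)
  then show ?thesis
    using part_antimono[OF assms(1), of "Suc t" k] t by simp
qed

lemma set_le_part_1:
  assumes "is_partition xs" "a \<in> set xs"
  shows "a \<le> part xs 1"
  using assms by (cases xs) (auto simp: is_partition_Cons part_def)

lemma durfee_j_spec:
  assumes "is_partition xs" "m < length xs"
  shows "1 \<le> durfee_j m xs" and "durfee_j m xs \<le> part xs (m + durfee_j m xs)"
proof -
  define P where "P = (\<lambda>j. 1 \<le> j \<and> j \<le> length xs \<and> j \<le> part xs (m + j))"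
  have dj: "durfee_j m xs = Greatest P"
    using assms(2) by (simp add: durfee_j_def P_def)
  have "P 1"
    using assms part_pos_iff[OF assms(1), of "m + 1"] by (simp add: P_def)
  moreover have "\<forall>j. P j \<longrightarrow> j \<le> length xs"
    by (simp add: P_def)
  ultimately have "P (Greatest P)" and "1 \<le> Greatest P"
    using GreatestI_nat Greatest_le_nat by blast+
  then show "1 \<le> durfee_j m xs" and "durfee_j m xs \<le> part xs (m + durfee_j m xs)"
    by (simp_all add: dj P_def)
qed

lemma durfee_j_eqI:
  assumes xs: "is_partition xs" and "1 \<le> j" "j \<le> part xs (m + j)" "part xs (m + j + 1) \<le> j"
  shows "durfee_j m xs = j"
proof -
  have "m + j \<le> length xs"
    using assms part_pos_iff[OF xs, of "m + j"] by simp
  moreover have "i \<le> j" if "i \<le> part xs (m + i)" for i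
  proof (rule ccontr)
    assume "\<not> i \<le> j"
    then have "part xs (m + i) \<le> part xs (m + j + 1)"
      by (intro part_antimono[OF xs]) auto
    then show False
      using that assms \<open>\<not> i \<le> j\<close> by linarith
  qed
  ultimately show ?thesis
    unfolding durfee_j_def using assms by (auto intro!: Greatest_equality)
qed

lemma length_durfee_alpha_le:
  assumes xs: "is_partition xs" and "m < length xs"
  shows "length (durfee_alpha m xs) + durfee_j m xs \<le> part xs 1"
proof -
  define d where "d = durfee_j m xs"
  define N where "N = part xs 1"
  define f where "f = (\<lambda>i. card {k. 1 \<le> k \<and> k \<le> m + d \<and> d + i \<le> part xs k})"
  have alpha: "durfee_alpha m xs = filter (\<lambda>c. 0 < c) (map f [1..<N + 1])"
    using assms(2) by (simp add: durfee_alpha_def d_def f_def N_def Let_def del: upt_Suc)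
  have "d \<le> part xs (m + d)" "part xs (m + d) \<le> N"
    using durfee_j_spec[OF assms] part_antimono[OF xs] by (auto simp: d_def N_def)
  then have dN: "d \<le> N" by simp
  have f_0: "f i = 0" if "N - d < i" for i
  proof -
    have "part xs k < d + i" if "1 \<le> k" for k
      using part_antimono[OF xs order.refl that] \<open>N - d < i\<close> dN by (simp add: N_def)
    then show ?thesis
      by (force simp: f_def)
  qed
  have "[1..<N + 1] = [1..<N - d + 1] @ [N - d + 1..<N + 1]"
    using dN upt_add_eq_append[of 1 "N - d + 1" d] by simp
  then have "length (durfee_alpha m xs) = length (filter (\<lambda>i. 0 < f i) [1..<N - d + 1])"
    using f_0 by (simp add: alpha filter_map comp_def del: upt_Suc)
  also have "\<dots> \<le> length [1..<N - d + 1]"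
    by (rule length_filter_le)
  finally show ?thesis
    using dN by (simp add: d_def N_def del: upt_Suc)
qed

lemma part_1_durfee_alpha:
  assumes xs: "is_partition xs" and "m < length xs"
    and strict: "durfee_j m xs < part xs (m + durfee_j m xs)"
  shows "part (durfee_alpha m xs) 1 = m + durfee_j m xs"
proof -
  define d where "d = durfee_j m xs"
  define f where "f = (\<lambda>i. card {k. 1 \<le> k \<and> k \<le> m + d \<and> d + i \<le> part xs k})"
  have alpha: "durfee_alpha m xs = filter (\<lambda>c. 0 < c) (map f [1..<part xs 1 + 1])"
    using assms(2) by (simp add: durfee_alpha_def d_def f_def Let_def del: upt_Suc)
  have "d + 1 \<le> part xs k" if "1 \<le> k" "k \<le> m + d" for k
    using strict part_antimono[OF xs that] by (simp add: d_def)
  then have "{k. 1 \<le> k \<and> k \<le> m + d \<and> d + 1 \<le> part xs k} = {1..m + d}"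
    by auto
  then have f_1: "f 1 = m + d"
    by (simp add: f_def)
  have "1 \<le> d" "part xs (m + d) \<le> part xs 1"
    using durfee_j_spec[OF assms(1,2)] part_antimono[OF xs] by (auto simp: d_def)
  then have "[1..<part xs 1 + 1] = 1 # [Suc 1..<part xs 1 + 1]"
    using strict by (intro upt_conv_Cons) (simp add: d_def)
  then show ?thesis
    using f_1 \<open>1 \<le> d\<close> by (simp add: alpha d_def part_def del: upt_Suc)
qed

lemma durfee_j_append_Cons:
  assumes part: "is_partition (A @ d # C)" and "length A = m + d" "1 \<le> d" "\<forall>a\<in>set A. d < a"
  shows "durfee_j m (A @ d # C) = d"
proof (rule durfee_j_eqI[OF part \<open>1 \<le> d\<close>])
  have "part A (m + d) \<in> set A"
    using assms(2,3) by (simp add: part_def)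
  then show "d \<le> part (A @ d # C) (m + d)"
    using assms by (auto simp: part_append)
  show "part (A @ d # C) (m + d + 1) \<le> d"
    using assms(2) by (simp add: part_append part_def nth_append)
qed

lemma is_partition_shifted:
  assumes "is_partition A" "\<forall>a\<in>set A. d < a" "0 < d"
    and "sorted_wrt (\<ge>) \<beta>" "\<forall>b\<in>set \<beta>. b < d"
  shows "is_partition (A @ d # map Suc \<beta> @ replicate k 1)"
  using assms
  by (auto simp: is_partition_append is_partition_Cons is_partition_map_Suc is_partition_replicate
      Suc_le_eq) (meson less_trans)

lemma Q3_memI:
  assumes A: "is_partition A" "length A = m + d" "\<forall>a\<in>set A. d < a"
    and "is_partition \<beta>" "\<forall>b\<in>set \<beta>. b < d"
    and "1 \<le> d" "part A 1 \<le> d + length \<beta> + k + 1"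
    and sum: "sum_list (A @ d # map Suc \<beta> @ replicate k 1) = n"
  shows "A @ d # map Suc \<beta> @ replicate k 1 \<in> Q3 m n"
proof -
  define \<mu> where "\<mu> = A @ d # map Suc \<beta> @ replicate k 1"
  have part: "is_partition \<mu>"
    unfolding \<mu>_def using assms by (intro is_partition_shifted) (auto simp: is_partition_def)
  have j: "durfee_j m \<mu> = d"
    unfolding \<mu>_def using part assms by (intro durfee_j_append_Cons) (simp_all add: \<mu>_def)
  have len: "m < length \<mu>"
    using A(2) by (simp add: \<mu>_def)
  have beta: "durfee_beta m \<mu> = d # map Suc \<beta> @ replicate k 1"
    using len j A(2) by (simp add: durfee_beta_def \<mu>_def)
  have "length (durfee_alpha m \<mu>) + d \<le> part \<mu> 1"
    using length_durfee_alpha_le[OF part len] j by simp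
  also have "part \<mu> 1 = part A 1"
    using A(2) \<open>1 \<le> d\<close> by (simp add: \<mu>_def part_append)
  finally have alpha_len: "length (durfee_alpha m \<mu>) \<le> length (durfee_beta m \<mu>)"
    using assms(7) beta by simp
  have "part A (m + d) \<in> set A"
    using A(2) \<open>1 \<le> d\<close> by (simp add: part_def)
  then have "d < part \<mu> (m + d)"
    using A by (auto simp: \<mu>_def part_append)
  then have alpha_1: "part (durfee_alpha m \<mu>) 1 = m + d"
    using part_1_durfee_alpha[OF part len] j by simp
  have "part \<mu> (m + d + 1) = d"
    using A(2) by (simp add: \<mu>_def part_append part_def nth_append)
  then have "int m = int (m + d + 1) - 1 - int (part \<mu> (m + d + 1))" "m + d + 1 \<le> length \<mu>"
    using A(2) by (simp_all add: \<mu>_def)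
  then have rank: "int m \<in> rank_set \<mu>"
    unfolding rank_set_def by fastforce
  show ?thesis
    using part sum rank j \<open>1 \<le> d\<close> alpha_len alpha_1
    unfolding \<mu>_def[symmetric] by (simp add: Q3_def Q_set_def partitions_def)
qed

definition P3_to_Q3 :: "nat \<Rightarrow> nat list \<Rightarrow> nat list" where
  "P3_to_Q3 m xs = (let d = durfee_j m xs - 1; A = take (m + d) (tl xs); \<beta> = drop (m + d) (tl xs)
     in A @ d # map Suc \<beta> @ replicate (hd xs - d - length \<beta>) 1)"

definition Q3_to_P3 :: "nat \<Rightarrow> nat list \<Rightarrow> nat list" where
  "Q3_to_P3 m \<mu> = (let d = durfee_j m \<mu>
     in (length \<mu> - m - 1) # take (m + d) \<mu> @
        map (\<lambda>b. b - 1) (takeWhile (\<lambda>b. 2 \<le> b) (drop (m + d + 1) \<mu>)))"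

lemma Q3_to_P3_shifted:
  assumes "is_partition (A @ d # map Suc \<beta> @ replicate k 1)"
    and "length A = m + d" "1 \<le> d" "\<forall>a\<in>set A. d < a" "\<forall>b\<in>set \<beta>. 0 < b"
  shows "Q3_to_P3 m (A @ d # map Suc \<beta> @ replicate k 1) = (d + length \<beta> + k) # A @ \<beta>"
proof -
  have "durfee_j m (A @ d # map Suc \<beta> @ replicate k 1) = d"
    using assms by (intro durfee_j_append_Cons) simp_all
  moreover have "takeWhile (\<lambda>b. 2 \<le> b) (map Suc \<beta> @ replicate k 1) = map Suc \<beta>"
    using assms(5) by (subst takeWhile_append2) (auto simp: Suc_le_eq)
  ultimately show ?thesis
    using assms(2) by (simp add: Q3_to_P3_def comp_def)
qed

lemma P3_durfee_bounds:
  assumes "xs \<in> P3 m n"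
  defines "j \<equiv> durfee_j m xs"
  shows "2 \<le> j" "j \<le> part xs (m + j)" "\<forall>b\<in>set (drop (m + j) xs). b + 2 \<le> j"
    "length xs + 1 \<le> m + part xs 1"
proof -
  have part: "is_partition xs" and "2 \<le> j"
    and beta: "int (part (durfee_beta m xs) 1) \<le> int j - 2"
    and "- int m + 1 \<le> rank xs"
    using assms by (auto simp: P3_def P_set_def partitions_def)
  then show "2 \<le> j" "length xs + 1 \<le> m + part xs 1"
    by (simp_all add: rank_def)
  have "m < length xs"
    using \<open>2 \<le> j\<close> by (auto simp: j_def durfee_j_def split: if_splits)
  then show "j \<le> part xs (m + j)"
    using durfee_j_spec[OF part] by (simp add: j_def)
  show "\<forall>b\<in>set (drop (m + j) xs). b + 2 \<le> j"
  proof
    fix b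
    assume "b \<in> set (drop (m + j) xs)"
    then have "b \<le> part (drop (m + j) xs) 1"
      by (intro set_le_part_1 is_partition_drop part)
    then show "b + 2 \<le> j"
      using beta \<open>m < length xs\<close> by (simp add: durfee_beta_def j_def)
  qed
qed

lemma P3_decomposition:
  assumes "xs \<in> P3 m n"
  obtains A d \<beta> k where "xs = (d + length \<beta> + k) # A @ \<beta>"
    and "P3_to_Q3 m xs = A @ d # map Suc \<beta> @ replicate k 1"
    and "is_partition A" "length A = m + d" "\<forall>a\<in>set A. d < a"
    and "is_partition \<beta>" "\<forall>b\<in>set \<beta>. b < d"
    and "1 \<le> d" "part A 1 \<le> d + length \<beta> + k + 1"
proof -
  define j where "j = durfee_j m xs"
  define d where "d = j - 1"
  have part: "is_partition xs"
    using assms by (simp add: P3_def P_set_def partitions_def)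
  note bounds = P3_durfee_bounds[OF assms, folded j_def]
  have mj: "m + j \<le> length xs"
    using bounds(1,2) part_pos_iff[OF part, of "m + j"] by simp
  obtain x ys where xs: "xs = x # ys"
    using mj bounds(1) by (cases xs) auto
  define A where "A = take (m + d) ys"
  define \<beta> where "\<beta> = drop (m + d) ys"
  define k where "k = x - d - length \<beta>"
  have ys: "is_partition ys"
    using part by (simp add: xs is_partition_Cons)
  have mj_Suc: "m + j = Suc (m + d)"
    using bounds(1) by (simp add: d_def)
  then have drop_xs: "\<beta> = drop (m + j) xs" and len_xs: "length xs = Suc (m + d + length \<beta>)"
    using mj by (simp_all only: \<beta>_def xs) simp_all
  have x: "x = d + length \<beta> + k"
    using bounds(4) len_xs by (simp add: k_def xs part_def)
  have "xs = (d + length \<beta> + k) # A @ \<beta>"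
    by (simp add: xs x A_def \<beta>_def)
  moreover have "P3_to_Q3 m xs = A @ d # map Suc \<beta> @ replicate k 1"
    by (simp add: P3_to_Q3_def Let_def xs A_def \<beta>_def k_def j_def d_def)
  moreover have "length A = m + d"
    using mj mj_Suc by (simp add: A_def xs)
  moreover have "\<forall>a\<in>set A. d < a"
  proof
    fix a
    assume "a \<in> set A"
    then have "part ys (m + d) \<le> a"
      unfolding A_def by (rule part_le_set_take[OF ys])
    moreover have "part ys (m + d) = part xs (m + j)"
      using bounds(1) mj_Suc by (simp add: xs part_def)
    ultimately show "d < a"
      using bounds(1,2) by (simp add: d_def)
  qed
  moreover have "\<forall>b\<in>set \<beta>. b < d"
    using bounds(1,3) by (auto simp: drop_xs d_def)
  moreover have "part A 1 \<le> d + length \<beta> + k + 1"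
  proof -
    have "A \<noteq> []"
      using \<open>length A = m + d\<close> bounds(1) by (auto simp: d_def)
    then have "part A 1 \<in> set A"
      by (cases A) (auto simp: part_def)
    then have "part A 1 \<in> set xs"
      by (auto simp: xs A_def dest: in_set_takeD)
    then show ?thesis
      using set_le_part_1[OF part] by (force simp: xs x part_def)
  qed
  moreover have "is_partition A" "is_partition \<beta>"
    using ys by (simp_all add: A_def \<beta>_def is_partition_take is_partition_drop)
  moreover have "1 \<le> d"
    using bounds(1) by (simp add: d_def)
  ultimately show thesis
    using that by blast
qed

lemma P3_to_Q3_in_Q3:
  assumes "xs \<in> P3 m n"
  shows "P3_to_Q3 m xs \<in> Q3 m n"
proof -
  obtain A d \<beta> k where xs: "xs = (d + length \<beta> + k) # A @ \<beta>"
    and \<mu>: "P3_to_Q3 m xs = A @ d # map Suc \<beta> @ replicate k 1"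
    and shape: "is_partition A" "length A = m + d" "\<forall>a\<in>set A. d < a"
      "is_partition \<beta>" "\<forall>b\<in>set \<beta>. b < d" "1 \<le> d" "part A 1 \<le> d + length \<beta> + k + 1"
    using P3_decomposition[OF assms] .
  have "sum_list (A @ d # map Suc \<beta> @ replicate k 1) = sum_list xs"
    using sum_list_Suc[of id \<beta>] by (simp add: xs sum_list_replicate)
  also have "\<dots> = n"
    using assms by (simp add: P3_def P_set_def partitions_def)
  finally show ?thesis
    unfolding \<mu> by (rule Q3_memI[OF shape])
qed

lemma Q3_to_P3_P3_to_Q3:
  assumes "xs \<in> P3 m n"
  shows "Q3_to_P3 m (P3_to_Q3 m xs) = xs"
proof -
  obtain A d \<beta> k where xs: "xs = (d + length \<beta> + k) # A @ \<beta>"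
    and \<mu>: "P3_to_Q3 m xs = A @ d # map Suc \<beta> @ replicate k 1"
    and shape: "is_partition A" "length A = m + d" "\<forall>a\<in>set A. d < a"
      "is_partition \<beta>" "\<forall>b\<in>set \<beta>. b < d" "1 \<le> d"
    using P3_decomposition[OF assms] .
  have "is_partition (A @ d # map Suc \<beta> @ replicate k 1)"
    using shape by (intro is_partition_shifted) (auto simp: is_partition_def)
  moreover have "\<forall>b\<in>set \<beta>. 0 < b"
    using shape(4) by (simp add: is_partition_def)
  ultimately show ?thesis
    unfolding \<mu> using shape by (subst Q3_to_P3_shifted) (simp_all add: xs)
qed

theorem lemma2p6:
  fixes m n :: nat
  assumes "1 < n"
  shows "\<exists>f. inj_on f (P3 m n) \<and> f ` P3 m n \<subseteq> Q3 m n"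
proof (intro exI conjI)
  show "inj_on (P3_to_Q3 m) (P3 m n)"
    using Q3_to_P3_P3_to_Q3 by (rule inj_on_inverseI)
  show "P3_to_Q3 m ` P3 m n \<subseteq> Q3 m n"
    using P3_to_Q3_in_Q3 by blast
qed

end
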